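(* Let $\mathcal{A}$ be a lattice tree automaton and $E$ a set of (conditional) approximation equations. If $\mathcal{A}'$ is obtained from $\mathcal{A}$ by merging states equivalent with respect to $E$ (written $\mathcal{A}\leadsto^!_E\mathcal{A}'$), then $\mathcal{L}(\mathcal{A})\subseteq\mathcal{L}(\mathcal{A}')$.
   Context: Lattice tree automaton (LTA) $\mathcal{A}=\langle\mathcal{F},\mathcal{Q},\mathcal{Q}_f,\Delta\rangle$ over an atomic lattice $\Lambda$: alphabet $\mathcal{F}=\mathcal{F}_\circ\cup\mathcal{F}_\bullet^{\#}$ (passive symbols, and interpreted symbols = elements of $\Lambda$ plus abstract operations, evaluated by a function $eval$ into $\Lambda$), finite states $\mathcal{Q}$, final states $\mathcal{Q}_f$, normalized transitions $f(q_1,\dots,q_n)\to q$ including lambda transitions $\lambda\to q$ ($\lambda\in\Lambda\setminus\{\bot\}$). Runs: a subterm over interpreted symbols whose evaluation is $\sqsubseteq\lambda$ may be replaced by $q$ if $\lambda\to q\in\Delta$; $f(q_1,\dots,q_n)$ may be replaced by $q$ if $f(q_1,\dots,q_n)\to q\in\Delta$. $\mathcal{L}(\mathcal{A},q)$ is the set of ground terms $t$ over passive symbols, operations and atoms of $\Lambda$ such that some $t'$ with $t\sqsubseteq t'$ (componentwise order, comparing interpreted subterms by their evaluations) satisfies $t'\to^*_{\mathcal{A}}q$; $\mathcal{L}(\mathcal{A})=\bigcup_{q\in\mathcal{Q}_f}\mathcal{L}(\mathcal{A},q)$. $merge(\mathcal{A},q_1,q_2)$ is the automaton obtained by replacing every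 occurrence of state $q_2$ (in transitions and in the set of final states) by $q_1$. Approximation equations have the form $u=v\Leftarrow c_1\wedge\dots\wedge c_n$ with $u,v$ terms with variables over passive and interpreted symbols. Two distinct states $q,q'$ are equivalent w.r.t. $E$ if there is an equation and a substitution $\sigma$ from variables to states such that (after abstracting concrete constants) $u\sigma\to^*_{\mathcal{A}}q$, $v\sigma\to^*_{\mathcal{A}}q'$ and the constraints $c_1\wedge\dots\wedge c_n$ are satisfiable for $\sigma$. $\mathcal{A}\leadsto^!_E\mathcal{A}'$ means $\mathcal{A}'$ is obtained by merging states of $\mathcal{A}$ equivalent w.r.t. $E$ until no more merges apply. *)

theory Defs
  imports Main
begin

datatype ('f, 'o, 'l) sym = Pas 'f | Opr 'o | Lat 'l

text \<open>Terms with variables (variables are used both for states in runs and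
  for variables of approximation equations).\<close>
datatype ('s, 'v) tm = Var 'v | Fun 's "('s, 'v) tm list"

fun ground :: "('s, 'v) tm \<Rightarrow> bool" where
  "ground (Var v) = False"
| "ground (Fun f ts) = (\<forall>t\<in>set ts. ground t)"

fun tsubst :: "('v \<Rightarrow> 'w) \<Rightarrow> ('s, 'v) tm \<Rightarrow> ('s, 'w) tm" where
  "tsubst \<sigma> (Var v) = Var (\<sigma> v)"
| "tsubst \<sigma> (Fun f ts) = Fun f (map (tsubst \<sigma>) ts)"

fun interp :: "(('f, 'o, 'l) sym, 'v) tm \<Rightarrow> bool" where
  "interp (Var v) = False"
| "interp (Fun (Pas f) ts) = False"
| "interp (Fun (Lat l) ts) = (ts = [])"
| "interp (Fun (Opr g) ts) = (\<forall>t\<in>set ts. interp t)"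

fun evalt :: "('o \<Rightarrow> 'l list \<Rightarrow> 'l) \<Rightarrow> (('f, 'o, 'l) sym, 'v) tm \<Rightarrow> 'l" where
  "evalt ev (Fun (Lat l) ts) = l"
| "evalt ev (Fun (Opr g) ts) = ev g (map (evalt ev) ts)"
| "evalt ev _ = undefined"

definition atom :: "'l::{lattice,order_bot} \<Rightarrow> bool" where
  "atom a \<longleftrightarrow> a \<noteq> bot \<and> (\<forall>x. x \<le> a \<longrightarrow> x = bot \<or> x = a)"

definition atomic_lattice :: "'l::{lattice,order_bot} itself \<Rightarrow> bool" where
  "atomic_lattice _ \<longleftrightarrow> (\<forall>x::'l. x \<noteq> bot \<longrightarrow> (\<exists>a. atom a \<and> a \<le> x))"

record ('f, 'o) signature =
  pas :: "'f set"
  ops :: "'o set"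
  parity :: "'f \<Rightarrow> nat"
  oarity :: "'o \<Rightarrow> nat"

datatype ('f, 'o, 'l, 'q) rule =
  Trans "('f, 'o, 'l) sym" "'q list" 'q
| LamTrans 'l 'q

record ('f, 'o, 'l, 'q) lta =
  sig :: "('f, 'o) signature"
  ev :: "'o \<Rightarrow> 'l list \<Rightarrow> 'l"
  states :: "'q set"
  final :: "'q set"
  delta :: "('f, 'o, 'l, 'q) rule set"

fun sym_in_sig :: "('f, 'o) signature \<Rightarrow> ('f, 'o, 'l) sym \<Rightarrow> nat \<Rightarrow> bool" where
  "sym_in_sig S (Pas f) n = (f \<in> pas S \<and> parity S f = n)"
| "sym_in_sig S (Opr g) n = (g \<in> ops S \<and> oarity S g = n)"
| "sym_in_sig S (Lat l) n = (n = 0)"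

fun rule_wf :: "('f, 'o, 'l::{lattice,order_bot}, 'q) lta \<Rightarrow> ('f, 'o, 'l, 'q) rule \<Rightarrow> bool" where
  "rule_wf A (Trans f qs q) =
     (sym_in_sig (sig A) f (length qs) \<and> set qs \<subseteq> states A \<and> q \<in> states A)"
| "rule_wf A (LamTrans l q) = (l \<noteq> bot \<and> q \<in> states A)"

definition wf_lta :: "('f, 'o, 'l::{lattice,order_bot}, 'q) lta \<Rightarrow> bool" where
  "wf_lta A \<longleftrightarrow> finite (states A) \<and> final A \<subseteq> states A \<and> finite (delta A)
     \<and> (\<forall>r\<in>delta A. rule_wf A r)"

inductive step :: "('f, 'o, 'l::{lattice,order_bot}, 'q) lta
    \<Rightarrow> (('f, 'o, 'l) sym, 'q) tm \<Rightarrow> (('f, 'o, 'l) sym, 'q) tm \<Rightarrow> bool"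
  for A where
  lam: "\<lbrakk>interp s; evalt (ev A) s \<le> l; LamTrans l q \<in> delta A\<rbrakk> \<Longrightarrow> step A s (Var q)"
| trans: "Trans f qs q \<in> delta A \<Longrightarrow> step A (Fun f (map Var qs)) (Var q)"
| ctxt: "step A s s' \<Longrightarrow> step A (Fun f (ts1 @ s # ts2)) (Fun f (ts1 @ s' # ts2))"

abbreviation run :: "('f, 'o, 'l::{lattice,order_bot}, 'q) lta
    \<Rightarrow> (('f, 'o, 'l) sym, 'q) tm \<Rightarrow> (('f, 'o, 'l) sym, 'q) tm \<Rightarrow> bool" where
  "run A \<equiv> (step A)\<^sup>*\<^sup>*"

inductive tleq :: "('o \<Rightarrow> 'l list \<Rightarrow> 'l) \<Rightarrow> (('f, 'o, 'l::{lattice,order_bot}) sym, 'v) tm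
    \<Rightarrow> (('f, 'o, 'l) sym, 'v) tm \<Rightarrow> bool"
  for e where
  interp: "\<lbrakk>interp t; interp t'; evalt e t \<le> evalt e t'\<rbrakk> \<Longrightarrow> tleq e t t'"
| comp: "list_all2 (tleq e) ts ts' \<Longrightarrow> tleq e (Fun f ts) (Fun f ts')"

fun atom_term :: "('f, 'o) signature \<Rightarrow> (('f, 'o, 'l::{lattice,order_bot}) sym, 'v) tm \<Rightarrow> bool" where
  "atom_term S (Var v) = False"
| "atom_term S (Fun (Pas f) ts) =
     (f \<in> pas S \<and> length ts = parity S f \<and> (\<forall>t\<in>set ts. atom_term S t))"
| "atom_term S (Fun (Opr g) ts) =
     (g \<in> ops S \<and> length ts = oarity S g \<and> (\<forall>t\<in>set ts. atom_term S t))"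
| "atom_term S (Fun (Lat l) ts) = (atom l \<and> ts = [])"

definition lang_q :: "('f, 'o, 'l::{lattice,order_bot}, 'q) lta \<Rightarrow> 'q
    \<Rightarrow> (('f, 'o, 'l) sym, 'q) tm set" where
  "lang_q A q = {t. atom_term (sig A) t \<and>
      (\<exists>t'. ground t' \<and> tleq (ev A) t t' \<and> run A t' (Var q))}"

definition lang :: "('f, 'o, 'l::{lattice,order_bot}, 'q) lta \<Rightarrow> (('f, 'o, 'l) sym, 'q) tm set" where
  "lang A = (\<Union>q\<in>final A. lang_q A q)"

definition ren :: "'q \<Rightarrow> 'q \<Rightarrow> 'q \<Rightarrow> 'q" where
  "ren q1 q2 q = (if q = q2 then q1 else q)"

fun ren_rule :: "'q \<Rightarrow> 'q \<Rightarrow> ('f, 'o, 'l, 'q) rule \<Rightarrow> ('f, 'o, 'l, 'q) rule" where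
  "ren_rule q1 q2 (Trans f qs q) = Trans f (map (ren q1 q2) qs) (ren q1 q2 q)"
| "ren_rule q1 q2 (LamTrans l q) = LamTrans l (ren q1 q2 q)"

definition merge :: "('f, 'o, 'l, 'q) lta \<Rightarrow> 'q \<Rightarrow> 'q \<Rightarrow> ('f, 'o, 'l, 'q) lta" where
  "merge A q1 q2 = A\<lparr> states := ren q1 q2 ` states A,
                      final := ren q1 q2 ` final A,
                      delta := ren_rule q1 q2 ` delta A \<rparr>"

text \<open>A conditional approximation equation \<open>u = v \<Leftarrow> c1 \<and> ... \<and> cn\<close>; the
  constraints are of an abstract type \<open>'c\<close> whose satisfiability (for an
  automaton and a substitution of states for variables) is given by a
  parameter \<open>sat\<close>.\<close>
record ('f, 'o, 'l, 'v, 'c) equation =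
  lhs :: "(('f, 'o, 'l) sym, 'v) tm"
  rhs :: "(('f, 'o, 'l) sym, 'v) tm"
  conds :: "'c list"

type_synonym ('f, 'o, 'l, 'q, 'v, 'c) satisfiability =
  "('f, 'o, 'l, 'q) lta \<Rightarrow> ('v \<Rightarrow> 'q) \<Rightarrow> 'c list \<Rightarrow> bool"

definition equiv_states ::
  "('f, 'o, 'l, 'q, 'v, 'c) satisfiability \<Rightarrow> ('f, 'o, 'l, 'v, 'c) equation set
   \<Rightarrow> ('f, 'o, 'l::{lattice,order_bot}, 'q) lta \<Rightarrow> 'q \<Rightarrow> 'q \<Rightarrow> bool" where
  "equiv_states sat E A q q' \<longleftrightarrow> q \<noteq> q' \<and> q \<in> states A \<and> q' \<in> states A \<and>
     (\<exists>eq\<in>E. \<exists>\<sigma>. run A (tsubst \<sigma> (lhs eq)) (Var q) \<and> run A (tsubst \<sigma> (rhs eq)) (Var q')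
        \<and> sat A \<sigma> (conds eq))"

definition merge_step ::
  "('f, 'o, 'l, 'q, 'v, 'c) satisfiability \<Rightarrow> ('f, 'o, 'l, 'v, 'c) equation set
   \<Rightarrow> ('f, 'o, 'l::{lattice,order_bot}, 'q) lta \<Rightarrow> ('f, 'o, 'l, 'q) lta \<Rightarrow> bool" where
  "merge_step sat E A A' \<longleftrightarrow> (\<exists>q1 q2. equiv_states sat E A q1 q2 \<and> A' = merge A q1 q2)"

definition merge_normal ::
  "('f, 'o, 'l, 'q, 'v, 'c) satisfiability \<Rightarrow> ('f, 'o, 'l, 'v, 'c) equation set
   \<Rightarrow> ('f, 'o, 'l::{lattice,order_bot}, 'q) lta \<Rightarrow> ('f, 'o, 'l, 'q) lta \<Rightarrow> bool" where
  "merge_normal sat E A A' \<longleftrightarrow> (merge_step sat E)\<^sup>*\<^sup>* A A' \<and> \<not> (\<exists>A''. merge_step sat E A' A'')"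

end

theory Submission
  imports Defs
begin

text \<open>Merging \<open>q2\<close> into \<open>q1\<close> renames states by \<open>ren q1 q2\<close>, and a renaming of states maps
  every transition to a transition of the renamed automaton, hence runs to runs. Ground terms
  contain no states, so an accepting run of \<open>A\<close> on a ground term becomes an accepting run of
  the merged automaton. The equations only select which states get merged.\<close>

fun rename_rule :: "('q \<Rightarrow> 'q) \<Rightarrow> ('f, 'o, 'l, 'q) rule \<Rightarrow> ('f, 'o, 'l, 'q) rule" where
  "rename_rule h (Trans f qs q) = Trans f (map h qs) (h q)"
| "rename_rule h (LamTrans l q) = LamTrans l (h q)"

definition rename_states :: "('q \<Rightarrow> 'q) \<Rightarrow> ('f, 'o, 'l, 'q) lta \<Rightarrow> ('f, 'o, 'l, 'q) lta" where
  "rename_states h A =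
     \<lparr> sig = sig A, ev = ev A, states = h ` states A, final = h ` final A,
       delta = rename_rule h ` delta A \<rparr>"

lemma ren_rule_eq_rename_rule: "ren_rule q1 q2 = rename_rule (ren q1 q2)"
proof (rule ext)
  fix r
  show "ren_rule q1 q2 r = rename_rule (ren q1 q2) r" by (cases r) simp_all
qed

lemma merge_eq_rename_states: "merge A q1 q2 = rename_states (ren q1 q2) A"
  by (simp add: merge_def rename_states_def ren_rule_eq_rename_rule)

lemma interp_imp_ground: "interp t \<Longrightarrow> ground t"
proof (induction t)
  case (Fun f ts)
  then show ?case by (cases f) auto
qed simp

lemma tsubst_ground: "ground t \<Longrightarrow> tsubst h t = t"
  by (induction t) (auto intro!: map_idI)

lemma step_rename_states:
  "step A s s' \<Longrightarrow> step (rename_states h A) (tsubst h s) (tsubst h s')"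
proof (induction rule: step.induct)
  case (lam s l q)
  have "LamTrans l (h q) \<in> delta (rename_states h A)"
    using lam.hyps(3) by (force simp: rename_states_def)
  then have "step (rename_states h A) s (Var (h q))"
    using lam.hyps(1,2) by (intro step.lam) (simp_all add: rename_states_def)
  then show ?case
    using lam.hyps(1) by (simp add: tsubst_ground interp_imp_ground)
next
  case (trans f qs q)
  have "Trans f (map h qs) (h q) \<in> delta (rename_states h A)"
    using trans by (force simp: rename_states_def)
  then have "step (rename_states h A) (Fun f (map Var (map h qs))) (Var (h q))"
    by (rule step.trans)
  then show ?case by (simp add: comp_def)
next
  case (ctxt s s' f ts1 ts2)
  then show ?case by (auto intro: step.ctxt)
qed

lemma run_rename_states:
  "run A s s' \<Longrightarrow> run (rename_states h A) (tsubst h s) (tsubst h s')"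
  by (induction rule: rtranclp_induct) (auto intro: rtranclp.rtrancl_into_rtrancl step_rename_states)

lemma lang_subset_lang_rename_states: "lang A \<subseteq> lang (rename_states h A)"
proof
  fix t assume "t \<in> lang A"
  then obtain q t' where q: "q \<in> final A" and t: "atom_term (sig A) t"
    and t': "ground t'" "tleq (ev A) t t'" and acc: "run A t' (Var q)"
    unfolding lang_def lang_q_def by auto
  have "run (rename_states h A) t' (Var (h q))"
    using run_rename_states[OF acc, of h] tsubst_ground[OF t'(1)] by simp
  moreover have "h q \<in> final (rename_states h A)"
    using q by (simp add: rename_states_def)
  moreover have "sig (rename_states h A) = sig A" "ev (rename_states h A) = ev A"
    by (simp_all add: rename_states_def)
  ultimately show "t \<in> lang (rename_states h A)"
    using t t' unfolding lang_def lang_q_def by auto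
qed

lemma lang_subset_lang_merge: "lang A \<subseteq> lang (merge A q1 q2)"
  unfolding merge_eq_rename_states by (rule lang_subset_lang_rename_states)

lemma lang_mono_merge_steps:
  "(merge_step sat E)\<^sup>*\<^sup>* A A' \<Longrightarrow> lang A \<subseteq> lang A'"
  by (induction rule: rtranclp_induct)
     (auto simp: merge_step_def dest: lang_subset_lang_merge[THEN subsetD])

theorem mainTheorem4:
  fixes A A' :: "('f, 'o, 'l::{lattice,order_bot}, 'q) lta"
    and E :: "('f, 'o, 'l, 'v, 'c) equation set"
    and sat :: "('f, 'o, 'l, 'q, 'v, 'c) satisfiability"
  assumes "atomic_lattice TYPE('l)"
    and "wf_lta A"
    and "merge_normal sat E A A'"
  shows "lang A \<subseteq> lang A'"
proof -
  from assms(3) have "(merge_step sat E)\<^sup>*\<^sup>* A A'" by (simp add: merge_normal_def)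
  then show ?thesis by (rule lang_mono_merge_steps)
qed

end
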